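(* Let $N\ge1$, $1<p<\infty$, $m>p'$ and $\chi,M>0$. The functional $\mathcal F_0$ has a unique radially symmetric nonincreasing minimizer over $\mathcal Y_M$, namely $$\rho_0=\Big(\frac{\chi}{p}\Big)^{\frac1{m-p'}}1_{B_{R_0}},\qquad R_0=\Big(\frac{M}{\omega_N}\Big(\frac p\chi\Big)^{\frac1{m-p'}}\Big)^{1/N}.$$
   Context: Notation. $\omega_N$ is the volume of the unit ball, $B_R$ is the ball of radius $R$ centered at the origin, and $p'=p/(p-1)$. Admissible class. $\mathcal Y_M=\{\rho\in L^1_+\cap L^m(\mathbb R^N):\ \int\rho=M,\ \int x\rho=0\}$. Limit functional. $\displaystyle\mathcal F_0(\rho)=\frac1{m-1}\int\rho^m-\frac{\chi}{p'}\int\rho^{p'}$. *)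

theory Defs
  imports "HOL-Analysis.Analysis"
begin

definition conj_exp :: "real \<Rightarrow> real" where
  "conj_exp p = p / (p - 1)"

definition omega :: "'n::euclidean_space itself \<Rightarrow> real" where
  "omega _ = measure lborel (ball (0::'n) 1)"

definition Y_adm :: "real \<Rightarrow> real \<Rightarrow> ('n::euclidean_space \<Rightarrow> real) set" where
  "Y_adm m M = {\<rho>. \<rho> \<in> borel_measurable lborel
      \<and> (\<forall>x. 0 \<le> \<rho> x)
      \<and> integrable lborel \<rho>
      \<and> integrable lborel (\<lambda>x. \<rho> x powr m)
      \<and> (\<integral>x. \<rho> x \<partial>lborel) = M
      \<and> integrable lborel (\<lambda>x. \<rho> x *\<^sub>R x)
      \<and> (\<integral>x. \<rho> x *\<^sub>R x \<partial>lborel) = 0}"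

definition F0 :: "real \<Rightarrow> real \<Rightarrow> real \<Rightarrow> ('n::euclidean_space \<Rightarrow> real) \<Rightarrow> real" where
  "F0 m p chi \<rho> = 1 / (m - 1) * (\<integral>x. \<rho> x powr m \<partial>lborel)
      - chi / conj_exp p * (\<integral>x. \<rho> x powr conj_exp p \<partial>lborel)"

definition radial_nonincr :: "('n::euclidean_space \<Rightarrow> real) \<Rightarrow> bool" where
  "radial_nonincr \<rho> \<longleftrightarrow> (\<exists>f::real \<Rightarrow> real.
      (\<forall>x. \<rho> x = f (norm x)) \<and> (\<forall>s t. 0 \<le> s \<longrightarrow> s \<le> t \<longrightarrow> f t \<le> f s))"

definition is_minimizer :: "real \<Rightarrow> real \<Rightarrow> real \<Rightarrow> real \<Rightarrow> ('n::euclidean_space \<Rightarrow> real) \<Rightarrow> bool" where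
  "is_minimizer m p chi M \<rho> \<longleftrightarrow> \<rho> \<in> Y_adm m M \<and> (\<forall>\<sigma>::'n \<Rightarrow> real. \<sigma> \<in> Y_adm m M \<longrightarrow> F0 m p chi \<rho> \<le> F0 m p chi \<sigma>)"

end

theory Submission
  imports Defs
begin

(*
  Let s > 0 with s^(m - p') = chi/p, and let phi(t) = t^m/(m - 1) - (chi/p') t^p' be the integrand
  of F_0. The quotient phi(t)/t decreases on (0, s] and increases on [s, oo), so phi(t) >= c t for
  t >= 0 with c = phi(s)/s, and equality holds only for t = 0 and t = s. Integrating against
  the fixed mass M gives F_0 >= c M. Equality holds exactly for densities that take only the
  values 0 and s. A radially nonincreasing density of this kind either vanishes somewhere in
  B_R0, and then lies below the plateau s 1_{B_R0} almost everywhere, or it does not, and then it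
  lies above it. Both have mass M, so they agree almost everywhere.
*)

definition potential :: "real \<Rightarrow> real \<Rightarrow> real \<Rightarrow> real \<Rightarrow> real" where
  "potential m a chi t = 1 / (m - 1) * t powr m - chi / a * t powr a"

lemma potential_zero [simp]: "potential m a chi 0 = 0"
  by (simp add: potential_def)

lemma potential_div_strict_min:
  fixes a m chi s t :: real
  assumes a: "1 < a" "a < m" and s: "0 < s" "s powr (m - a) = chi * (a - 1) / a"
    and t: "0 < t" "t \<noteq> s"
  shows "potential m a chi s / s < potential m a chi t / t"
proof -
  define h where "h x = x powr (m - 1) / (m - 1) - chi / a * x powr (a - 1)" for x
  have h_eq: "potential m a chi x / x = h x" if "0 < x" for x
    using that by (simp add: potential_def h_def powr_diff field_simps)
  have h_deriv: "DERIV h x :> x powr (a - 2) * (x powr (m - a) - s powr (m - a))" if "0 < x" for x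
  proof -
    have "DERIV h x :>
        (m - 1) * x powr (m - 1 - 1) / (m - 1) - chi / a * ((a - 1) * x powr (a - 1 - 1))"
      unfolding h_def using that a by (intro derivative_eq_intros refl) auto
    moreover have "x powr (m - 2) = x powr (a - 2) * x powr (m - a)"
      using that by (simp add: powr_add[symmetric])
    then have "(m - 1) * x powr (m - 1 - 1) / (m - 1) - chi / a * ((a - 1) * x powr (a - 1 - 1))
        = x powr (a - 2) * (x powr (m - a) - s powr (m - a))"
      using a unfolding s(2) by (simp add: field_simps)
    ultimately show ?thesis
      by simp
  qed
  have h_cont: "continuous_on {u..v} h" if "0 < u" for u v
    using that a unfolding h_def by (intro continuous_intros) auto
  have "h s < h t"
  proof (cases "s < t")
    case True
    show ?thesis
    proof (rule DERIV_pos_imp_increasing_open[OF True _ h_cont[OF s(1)]])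
      fix x assume x: "s < x" "x < t"
      then have "s powr (m - a) < x powr (m - a)"
        using s(1) a by (intro powr_less_mono2) auto
      then show "\<exists>y. DERIV h x :> y \<and> 0 < y"
        using h_deriv[of x] x s(1) by auto
    qed
  next
    case False
    with t(2) have "t < s" by simp
    show ?thesis
    proof (rule DERIV_neg_imp_decreasing_open[OF \<open>t < s\<close> _ h_cont[OF t(1)]])
      fix x assume x: "t < x" "x < s"
      then have "x powr (m - a) < s powr (m - a)"
        using t(1) a by (intro powr_less_mono2) auto
      then show "\<exists>y. DERIV h x :> y \<and> y < 0"
        using h_deriv[of x] x t(1) by (auto intro!: mult_pos_neg)
    qed
  qed
  then show ?thesis
    using h_eq s(1) t(1) by simp
qed

lemma potential_ge_linear:
  fixes a m chi s t :: real
  assumes a: "1 < a" "a < m" and s: "0 < s" "s powr (m - a) = chi * (a - 1) / a" and "0 \<le> t"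
  shows "potential m a chi s / s * t \<le> potential m a chi t"
proof (cases "t = 0 \<or> t = s")
  case False
  with \<open>0 \<le> t\<close> have "0 < t" "t \<noteq> s" by auto
  with potential_div_strict_min[OF a s this] show ?thesis
    by (simp add: field_simps)
qed (use s in auto)

lemma potential_eq_linear_iff:
  fixes a m chi s t :: real
  assumes a: "1 < a" "a < m" and s: "0 < s" "s powr (m - a) = chi * (a - 1) / a" and "0 \<le> t"
  shows "potential m a chi s / s * t = potential m a chi t \<longleftrightarrow> t = 0 \<or> t = s"
proof (cases "t = 0 \<or> t = s")
  case False
  with \<open>0 \<le> t\<close> have "0 < t" "t \<noteq> s" by auto
  with potential_div_strict_min[OF a s this] False show ?thesis
    by (simp add: field_simps)
qed (use s in auto)

lemma integrable_powr_between:
  fixes \<sigma> :: "'a \<Rightarrow> real"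
  assumes "\<sigma> \<in> borel_measurable M" "AE x in M. 0 \<le> \<sigma> x"
    and "integrable M \<sigma>" "integrable M (\<lambda>x. \<sigma> x powr m)" and "1 \<le> a" "a \<le> m"
  shows "integrable M (\<lambda>x. \<sigma> x powr a)"
proof (rule Bochner_Integration.integrable_bound)
  show "integrable M (\<lambda>x. \<sigma> x + \<sigma> x powr m)"
    using assms(3,4) by auto
  show "(\<lambda>x. \<sigma> x powr a) \<in> borel_measurable M"
    using assms(1) by measurable
  have bound: "t powr a \<le> t + t powr m" if "0 \<le> t" for t :: real
  proof (cases "t \<le> 1")
    case True
    then have "t powr a \<le> t"
      using that \<open>1 \<le> a\<close> by (cases "t = 0") (auto intro: powr_le_one_le)
    then show ?thesis
      using powr_ge_zero[of t m] by linarith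
  next
    case False
    then have "t powr a \<le> t powr m"
      using \<open>a \<le> m\<close> by (intro powr_mono) auto
    then show ?thesis using that by linarith
  qed
  show "AE x in M. norm (\<sigma> x powr a) \<le> norm (\<sigma> x + \<sigma> x powr m)"
    using assms(2) by eventually_elim (use bound in simp)
qed

lemma omega_pos: "0 < omega TYPE('a::euclidean_space)"
  by (simp add: omega_def content_ball_pos)

lemma measure_ball_eq_omega:
  "0 \<le> r \<Longrightarrow> measure lborel (ball (0::'a::euclidean_space) r) = omega TYPE('a) * r ^ DIM('a)"
  using content_ball_conv_unit_ball[of r "0::'a"] by (simp add: omega_def)

lemma measure_ball_of_volume:
  fixes V :: real
  assumes "0 < V"
  shows "measure lborel (ball (0::'a::euclidean_space) ((V / omega TYPE('a)) powr (1 / DIM('a))))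
    = V"
proof -
  define r where "r = (V / omega TYPE('a)) powr (1 / DIM('a))"
  have "0 < r"
    using assms omega_pos[where 'a='a] by (simp add: r_def)
  then have "r ^ DIM('a) = r powr DIM('a)"
    by (simp add: powr_realpow)
  also have "\<dots> = V / omega TYPE('a)"
    using assms omega_pos[where 'a='a] by (simp add: r_def powr_powr)
  finally show ?thesis
    using measure_ball_eq_omega[of r, where 'a='a] omega_pos[where 'a='a] by (simp add: r_def)
qed

lemma lborel_distr_uminus_euclidean:
  "distr lborel borel uminus = (lborel :: 'a::euclidean_space measure)"
  using lborel_affine[of "-1" "0::'a"] by (simp add: density_1)

lemma integral_lborel_odd_eq_0:
  fixes f :: "'a::euclidean_space \<Rightarrow> 'b::{banach, second_countable_topology}"
  assumes "f \<in> borel_measurable borel" and odd: "\<And>x. f (- x) = - f x"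
  shows "(\<integral>x. f x \<partial>lborel) = 0"
proof -
  have "(\<integral>x. f x \<partial>lborel) = (\<integral>x. f x \<partial>distr lborel borel uminus)"
    by (simp add: lborel_distr_uminus_euclidean)
  also have "\<dots> = (\<integral>x. f (- x) \<partial>lborel)"
    using assms(1) by (simp add: integral_distr)
  also have "\<dots> = - (\<integral>x. f x \<partial>lborel)"
    by (simp add: odd)
  finally have "2 *\<^sub>R (\<integral>x. f x \<partial>lborel) = 0"
    unfolding scaleR_2 by (metis add.right_inverse)
  then show ?thesis
    by simp
qed

lemma emeasure_ball_finite: "emeasure lborel (ball (0::'a::euclidean_space) r) < \<infinity>"
  by (rule emeasure_bounded_finite) simp

lemma integrable_plateau:
  fixes s r :: real
  shows "integrable lborel (\<lambda>x::'a::euclidean_space. s * indicator (ball 0 r) x)"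
  by (intro integrable_mult_right integrable_real_indicator emeasure_ball_finite) simp

lemma plateau_in_Y_adm:
  fixes s r :: real
  assumes "0 \<le> s"
  shows "(\<lambda>x::'a::euclidean_space. s * indicator (ball 0 r) x)
    \<in> Y_adm m (s * measure lborel (ball (0::'a) r))"
proof -
  define B where "B = ball (0::'a) r"
  have [measurable]: "B \<in> sets borel"
    by (simp add: B_def)
  have finite: "emeasure lborel B < \<infinity>"
    unfolding B_def by (rule emeasure_ball_finite)
  have powr_eq: "(\<lambda>x. (s * indicator B x) powr m) = (\<lambda>x. s powr m * indicator B x)"
    by (auto simp: indicator_def)
  have "integrable lborel (\<lambda>x. (s * indicator B x) *\<^sub>R x)"
  proof (rule Bochner_Integration.integrable_bound)
    show "integrable lborel (\<lambda>x. s * r * indicator B x)"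
      unfolding B_def by (rule integrable_plateau)
    show "AE x in lborel. norm ((s * indicator B x) *\<^sub>R x) \<le> norm (s * r * indicator B x)"
      using assms by (auto simp: B_def indicator_def abs_mult intro!: mult_left_mono)
  qed measurable
  moreover have "(\<integral>x. (s * indicator B x) *\<^sub>R x \<partial>lborel) = 0"
    by (rule integral_lborel_odd_eq_0) (auto simp: B_def indicator_def)
  ultimately show ?thesis
    using assms finite unfolding Y_adm_def B_def[symmetric] by (simp add: powr_eq)
qed

lemma radial_nonincr_plateau:
  fixes s r :: real
  shows "0 \<le> s \<Longrightarrow> radial_nonincr (\<lambda>x::'a::euclidean_space. s * indicator (ball 0 r) x)"
  unfolding radial_nonincr_def
  by (rule exI[of _ "\<lambda>t. if t < r then s else 0"]) (auto simp: indicator_def)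

lemma two_valued_radial_eq_plateau:
  fixes \<rho> :: "'a::euclidean_space \<Rightarrow> real"
  assumes "radial_nonincr \<rho>" and "0 < s"
    and two_valued: "AE x in lborel. \<rho> x = 0 \<or> \<rho> x = s"
    and "integrable lborel \<rho>" and "(\<integral>x. \<rho> x \<partial>lborel) = s * measure lborel (ball (0::'a) r)"
  shows "AE x in lborel. \<rho> x = s * indicator (ball 0 r) x"
proof -
  define B where "B = ball (0::'a) r"
  obtain f where f: "\<And>x. \<rho> x = f (norm x)" "\<And>a b. 0 \<le> a \<Longrightarrow> a \<le> b \<Longrightarrow> f b \<le> f a"
    using assms(1) unfolding radial_nonincr_def by blast
  note eq_if_AE_le = sigma_finite_measure.integral_eq_mono_AE_eq_AE[OF sigma_finite_lborel]
  have plateau: "integrable lborel (\<lambda>x. s * indicator B x)"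
    unfolding B_def by (rule integrable_plateau)
  have same_mass: "(\<integral>x. \<rho> x \<partial>lborel) = (\<integral>x. s * indicator B x \<partial>lborel)"
    using assms(5) by (simp add: B_def)
  consider (vanishes_inside) x where "x \<in> B" "\<rho> x = 0" | (positive_inside) "\<forall>x\<in>B. \<rho> x \<noteq> 0"
    by blast
  then have "AE x in lborel. \<rho> x = s * indicator B x"
  proof cases
    case vanishes_inside
    have vanishes_outside: "\<rho> y \<noteq> s" if "y \<notin> B" for y
    proof -
      have "f (norm y) \<le> f (norm x)"
        using vanishes_inside(1) that by (intro f(2)) (auto simp: B_def)
      then show ?thesis
        using f(1)[of x] f(1)[of y] vanishes_inside(2) \<open>0 < s\<close> by auto
    qed
    have "AE y in lborel. \<rho> y \<le> s * indicator B y"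
      using two_valued
      by eventually_elim (use vanishes_outside \<open>0 < s\<close> in \<open>auto simp: indicator_def\<close>)
    then show ?thesis
      using eq_if_AE_le[OF assms(4) plateau same_mass] by simp
  next
    case positive_inside
    have "AE y in lborel. s * indicator B y \<le> \<rho> y"
      using two_valued
      by eventually_elim (use positive_inside \<open>0 < s\<close> in \<open>auto simp: indicator_def\<close>)
    then have "AE y in lborel. s * indicator B y = \<rho> y"
      using eq_if_AE_le[OF plateau assms(4) same_mass[symmetric]] by simp
    then show ?thesis
      by eventually_elim simp
  qed
  then show ?thesis
    by (simp add: B_def)
qed

lemma Y_adm_nonneg: "\<rho> \<in> Y_adm m M \<Longrightarrow> 0 \<le> \<rho> x"
  by (simp add: Y_adm_def)

lemma conj_exp_gt_1: "1 < p \<Longrightarrow> 1 < conj_exp p"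
  by (simp add: conj_exp_def)

context
  fixes m p chi s :: real
  assumes p: "1 < p" and m: "conj_exp p < m"
    and s: "0 < s" "s powr (m - conj_exp p) = chi / p"
begin

abbreviation "\<phi> \<equiv> potential m (conj_exp p) chi"

abbreviation "min_slope \<equiv> \<phi> s / s"

lemma critical_level: "s powr (m - conj_exp p) = chi * (conj_exp p - 1) / conj_exp p"
proof -
  have "(conj_exp p - 1) / conj_exp p = 1 / p"
    using p by (simp add: conj_exp_def field_simps)
  then show ?thesis
    using s(2) by (metis times_divide_eq_right mult.right_neutral)
qed

lemma potential_conj_exp_ge_linear: "0 \<le> t \<Longrightarrow> min_slope * t \<le> \<phi> t"
  using potential_ge_linear[OF conj_exp_gt_1[OF p] m s(1) critical_level] .

lemma potential_conj_exp_eq_linear_iff: "0 \<le> t \<Longrightarrow> min_slope * t = \<phi> t \<longleftrightarrow> t = 0 \<or> t = s"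
  using potential_eq_linear_iff[OF conj_exp_gt_1[OF p] m s(1) critical_level] .

lemma integrable_powr_conj_exp:
  assumes "\<rho> \<in> Y_adm m M"
  shows "integrable lborel (\<lambda>x. \<rho> x powr conj_exp p)"
proof (rule integrable_powr_between)
  show "\<rho> \<in> borel_measurable lborel" "AE x in lborel. 0 \<le> \<rho> x"
    "integrable lborel \<rho>" "integrable lborel (\<lambda>x. \<rho> x powr m)"
    using assms by (simp_all add: Y_adm_def)
qed (use conj_exp_gt_1[OF p] m in auto)

lemma integrable_potential:
  assumes "\<rho> \<in> Y_adm m M"
  shows "integrable lborel (\<lambda>x. \<phi> (\<rho> x))"
  using assms integrable_powr_conj_exp[OF assms] unfolding potential_def Y_adm_def
  by (intro Bochner_Integration.integrable_diff integrable_mult_right) simp_all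

lemma F0_eq_integral_potential:
  assumes "\<rho> \<in> Y_adm m M"
  shows "F0 m p chi \<rho> = (\<integral>x. \<phi> (\<rho> x) \<partial>lborel)"
  using assms integrable_powr_conj_exp[OF assms] unfolding F0_def potential_def Y_adm_def
  by (subst Bochner_Integration.integral_diff) auto

lemma F0_minus_min_eq_integral:
  assumes "\<rho> \<in> Y_adm m M"
  shows "F0 m p chi \<rho> - min_slope * M = (\<integral>x. \<phi> (\<rho> x) - min_slope * \<rho> x \<partial>lborel)"
  using assms integrable_potential[OF assms]
  by (subst Bochner_Integration.integral_diff) (auto simp: F0_eq_integral_potential Y_adm_def)

lemma F0_ge_min:
  assumes "\<rho> \<in> Y_adm m M"
  shows "min_slope * M \<le> F0 m p chi \<rho>"
proof -
  have "0 \<le> (\<integral>x. \<phi> (\<rho> x) - min_slope * \<rho> x \<partial>lborel)"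
    using potential_conj_exp_ge_linear[OF Y_adm_nonneg[OF assms]]
    by (intro Bochner_Integration.integral_nonneg) simp
  then show ?thesis
    using F0_minus_min_eq_integral[OF assms] by linarith
qed

lemma F0_eq_min_iff:
  assumes "\<rho> \<in> Y_adm m M"
  shows "F0 m p chi \<rho> = min_slope * M \<longleftrightarrow> (AE x in lborel. \<rho> x = 0 \<or> \<rho> x = s)"
proof -
  note nonneg = Y_adm_nonneg[OF assms]
  have "integrable lborel (\<lambda>x. \<phi> (\<rho> x) - min_slope * \<rho> x)"
    using integrable_potential[OF assms] assms by (simp add: Y_adm_def)
  moreover have "AE x in lborel. 0 \<le> \<phi> (\<rho> x) - min_slope * \<rho> x"
    using potential_conj_exp_ge_linear[OF nonneg] by simp
  ultimately have "(\<integral>x. \<phi> (\<rho> x) - min_slope * \<rho> x \<partial>lborel) = 0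
      \<longleftrightarrow> (AE x in lborel. \<phi> (\<rho> x) - min_slope * \<rho> x = 0)"
    by (rule integral_nonneg_eq_0_iff_AE)
  moreover have "\<phi> (\<rho> x) - min_slope * \<rho> x = 0 \<longleftrightarrow> \<rho> x = 0 \<or> \<rho> x = s" for x
    using potential_conj_exp_eq_linear_iff[OF nonneg, of x] by auto
  ultimately show ?thesis
    using F0_minus_min_eq_integral[OF assms] by auto
qed

context
  fixes r M :: real
  assumes mass: "s * measure lborel (ball (0::'a::euclidean_space) r) = M"
begin

lemma plateau_adm: "(\<lambda>x::'a. s * indicator (ball 0 r) x) \<in> Y_adm m M"
  using plateau_in_Y_adm[of s r m, where 'a='a] s(1) mass by simp

lemma F0_plateau: "F0 m p chi (\<lambda>x::'a. s * indicator (ball 0 r) x) = min_slope * M"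
  using F0_eq_min_iff[OF plateau_adm] by (simp add: indicator_def)

lemma is_minimizer_plateau: "is_minimizer m p chi M (\<lambda>x::'a. s * indicator (ball 0 r) x)"
  unfolding is_minimizer_def using plateau_adm F0_plateau F0_ge_min by auto

lemma radial_minimizer_eq_plateau:
  fixes \<rho> :: "'a \<Rightarrow> real"
  assumes "is_minimizer m p chi M \<rho>" and "radial_nonincr \<rho>"
  shows "AE x in lborel. \<rho> x = s * indicator (ball 0 r) x"
proof -
  have adm: "\<rho> \<in> Y_adm m M"
    using assms(1) by (simp add: is_minimizer_def)
  have "F0 m p chi \<rho> \<le> min_slope * M"
    using assms(1) plateau_adm F0_plateau unfolding is_minimizer_def by metis
  with F0_ge_min[OF adm] have "AE x in lborel. \<rho> x = 0 \<or> \<rho> x = s"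
    using F0_eq_min_iff[OF adm] by simp
  from two_valued_radial_eq_plateau[OF assms(2) s(1) this] adm mass show ?thesis
    by (simp add: Y_adm_def)
qed

end

end

theorem mainTheorem15:
  fixes p m chi M :: real
  assumes "1 < p" and "m > conj_exp p" and "chi > 0" and "M > 0"
  defines "R0 \<equiv> (M / omega TYPE(real^'n) * (p / chi) powr (1 / (m - conj_exp p)))
                  powr (1 / real CARD('n))"
  defines "\<rho>0 \<equiv> (\<lambda>x::real^'n. (chi / p) powr (1 / (m - conj_exp p)) * indicator (ball 0 R0) x)"
  shows "is_minimizer m p chi M \<rho>0 \<and> radial_nonincr \<rho>0
    \<and> (\<forall>\<rho>::real^'n \<Rightarrow> real. is_minimizer m p chi M \<rho> \<and> radial_nonincr \<rho>
          \<longrightarrow> (AE x in lborel. \<rho> x = \<rho>0 x))"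
proof -
  define s where "s = (chi / p) powr (1 / (m - conj_exp p))"
  have s_pos: "0 < s"
    using assms(1,3) by (simp add: s_def)
  have s_crit: "s powr (m - conj_exp p) = chi / p"
    using assms(1-3) by (simp add: s_def powr_powr)
  have "(p / chi) powr (1 / (m - conj_exp p)) = 1 / s"
    using assms(1,3) by (simp add: s_def powr_divide)
  then have "R0 = (M / s / omega TYPE(real^'n)) powr (1 / DIM(real^'n))"
    by (simp add: R0_def mult.commute)
  then have mass: "s * measure lborel (ball (0::real^'n) R0) = M"
    using measure_ball_of_volume[of "M / s", where 'a="real^'n"] s_pos assms(4) by simp
  have \<rho>0_eq: "\<rho>0 = (\<lambda>x. s * indicator (ball 0 R0) x)"
    by (simp add: \<rho>0_def s_def)
  show ?thesis
    unfolding \<rho>0_eq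
    using is_minimizer_plateau[OF assms(1,2) s_pos s_crit mass]
      radial_nonincr_plateau[of s R0] s_pos
      radial_minimizer_eq_plateau[OF assms(1,2) s_pos s_crit mass]
    by auto
qed

end
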